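(* If $\nu\ge\tfrac32$, then the function $x\mapsto -\mathcal{K}_\nu'(x)$ is strictly log-concave on $(0,\infty)$.
   Context: For $\nu>0$ define $\mathcal{K}_\nu:(0,\infty)\to(0,\infty)$ by $\mathcal{K}_\nu(x)=2^{\nu-1}\Gamma(\nu)x^\nu K_\nu(x)$, where $K_\nu$ is the modified Bessel function of the second kind (MacDonald function). Note $-\mathcal{K}_\nu'(x)=2^{\nu-1}\Gamma(\nu)x^\nu K_{\nu-1}(x)>0$. *)

theory Defs
  imports "HOL-Analysis.Analysis"
begin

text \<open>Modified Bessel function of the second kind (MacDonald function), via the
standard integral representation valid for x > 0 and real order nu:
  K_nu(x) = integral over t in [0,inf) of exp(-x cosh t) cosh(nu t).\<close>
definition besselK :: "real \<Rightarrow> real \<Rightarrow> real" where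
  "besselK nu x = (LBINT t:{0..}. exp (- x * cosh t) * cosh (nu * t))"

definition calK :: "real \<Rightarrow> real \<Rightarrow> real" where
  "calK nu x = 2 powr (nu - 1) * Gamma nu * x powr nu * besselK nu x"

definition strictly_concave_on :: "real set \<Rightarrow> (real \<Rightarrow> real) \<Rightarrow> bool" where
  "strictly_concave_on S f \<longleftrightarrow>
     (\<forall>x\<in>S. \<forall>y\<in>S. x \<noteq> y \<longrightarrow> (\<forall>u::real. 0 < u \<and> u < 1 \<longrightarrow>
        f ((1 - u) * x + u * y) > (1 - u) * f x + u * f y))"

definition strictly_log_concave_on :: "real set \<Rightarrow> (real \<Rightarrow> real) \<Rightarrow> bool" where
  "strictly_log_concave_on S f \<longleftrightarrow>
     (\<forall>x\<in>S. f x > 0) \<and> strictly_concave_on S (\<lambda>x. ln (f x))"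

end

theory Submission
  imports Defs
begin

text \<open>Write \<open>a = \<nu> - 1\<close>. Then \<open>-\<K>\<^sub>\<nu>'(x) = c x\<^sup>a\<^sup>+\<^sup>1 K\<^sub>a(x)\<close> with \<open>c > 0\<close>, and
  with \<open>q(x) = -x K\<^sub>a'(x) / K\<^sub>a(x)\<close> the logarithmic derivative of \<open>x\<^sup>a\<^sup>+\<^sup>1 K\<^sub>a(x)\<close> is
  \<open>(a + 1 - q) / x\<close>. Bessel's equation becomes the Riccati equation \<open>x q' = q\<^sup>2 - a\<^sup>2 - x\<^sup>2\<close>,
  so \<open>((a + 1 - q) / x)' = -F / x\<^sup>2\<close> with \<open>F = q\<^sup>2 - q - x\<^sup>2 - a\<^sup>2 + a + 1\<close>, and it suffices
  that \<open>F > 0\<close>. At a zero of \<open>F\<close> one computes \<open>x F' = (2a + 1)(a - 1 - q) < 0\<close> since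
  \<open>q \<ge> a\<close>; hence if \<open>F(x\<^sub>0) \<le> 0\<close> then \<open>F < 0\<close> on \<open>(x\<^sub>0, \<infinity>)\<close>. There \<open>q < x + a + 1\<close>
  and \<open>(q - x - a - 1) / x\<close> has derivative \<open>F / x\<^sup>2 < 0\<close>, so \<open>q - x\<close> eventually drops
  below \<open>-(a + 1)\<close>, contradicting \<open>q \<ge> x\<close>. Only \<open>a \<ge> 0\<close>, i.e. \<open>\<nu> \<ge> 1\<close>, is used.
  All properties of \<open>K\<^sub>a\<close> are derived from its integral representation by differentiation
  under the integral sign and integration by parts.\<close>

section \<open>Exponential bounds and integrability\<close>

lemma cosh_ge_one_plus_sq_quarter:
  fixes t :: real assumes "t \<ge> 0" shows "1 + t\<^sup>2 / 4 \<le> cosh t"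
proof -
  have "1 + t + t\<^sup>2 / 2 \<le> exp t" using exp_lower_Taylor_quadratic[OF assms] by simp
  moreover have "1 - t \<le> exp (- t)" using exp_ge_add_one_self[of "- t"] by simp
  ultimately show ?thesis unfolding cosh_def by (simp add: field_simps)
qed

lemma exp_linear_minus_cosh_le:
  fixes P b t :: real assumes b: "b > 0" and t: "t \<ge> 0"
  shows "exp (P * t - b * cosh t) \<le> exp ((P + 1)\<^sup>2 / b - b) * exp (- t)"
proof -
  have "0 \<le> b * (t / 2 - (P + 1) / b)\<^sup>2" using b by simp
  also have "\<dots> = b * t\<^sup>2 / 4 - (P + 1) * t + (P + 1)\<^sup>2 / b"
    using b by (simp add: field_simps power2_eq_square)
  finally have "(P + 1) * t - b * t\<^sup>2 / 4 \<le> (P + 1)\<^sup>2 / b" by linarith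
  moreover have "b * (1 + t\<^sup>2 / 4) \<le> b * cosh t"
    using cosh_ge_one_plus_sq_quarter[OF t] b by simp
  ultimately have "P * t - b * cosh t \<le> (P + 1)\<^sup>2 / b - b + - t" by (simp add: algebra_simps)
  then show ?thesis by (simp flip: exp_add)
qed

lemma einterval_0_infty: "einterval 0 \<infinity> = {0::real<..}"
  by (auto simp: einterval_iff zero_ereal_def)

lemma tendsto_exp_neg_at_top: "((\<lambda>t::real. exp (- t)) \<longlongrightarrow> 0) at_top"
  by (auto intro!: exp_at_bot[THEN filterlim_compose] filterlim_ident simp: filterlim_uminus_at_bot)

lemma set_integrable_exp_neg: "set_integrable lborel {0<..} (\<lambda>t::real. exp (- t))"
proof -
  have "set_integrable lborel (einterval 0 \<infinity>) (\<lambda>t::real. exp (- t))"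
  proof (rule interval_integral_FTC_nonneg(1)[where F = "\<lambda>t. - exp (- t)" and A = "-1" and B = 0])
    show "(((\<lambda>t. - exp (- t)) \<circ> real_of_ereal) \<longlongrightarrow> -1) (at_right 0)"
      by (auto simp: zero_ereal_def ereal_tendsto_simps intro!: tendsto_eq_intros)
    show "(((\<lambda>t. - exp (- t)) \<circ> real_of_ereal) \<longlongrightarrow> 0) (at_left \<infinity>)"
      unfolding ereal_tendsto_simps using tendsto_minus[OF tendsto_exp_neg_at_top] by simp
  qed (auto intro!: derivative_eq_intros)
  then show ?thesis by (simp add: einterval_0_infty)
qed

lemma set_integrable_exp_linear_minus_cosh:
  fixes P b :: real assumes b: "b > 0"
  shows "set_integrable lborel {0<..} (\<lambda>t. exp (P * t - b * cosh t))"
proof (rule set_integrable_bound[OF set_integrable_mult_right[OF set_integrable_exp_neg,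
      of "exp ((P + 1)\<^sup>2 / b - b)"]])
  show "set_borel_measurable lborel {0<..} (\<lambda>t. exp (P * t - b * cosh t))"
    unfolding set_borel_measurable_def measurable_lborel2
    by (intro borel_measurable_continuous_on_indicator) (auto intro!: continuous_intros)
  show "AE t in lborel. t \<in> {0<..} \<longrightarrow>
      norm (exp (P * t - b * cosh t)) \<le> norm (exp ((P + 1)\<^sup>2 / b - b) * exp (- t))"
    using exp_linear_minus_cosh_le[OF b] by auto
qed

lemma abs_sinh_le_cosh_real: "\<bar>sinh x\<bar> \<le> cosh (x :: real)"
  using sinh_le_cosh_real[of x] sinh_le_cosh_real[of "- x"] by (simp add: abs_le_iff)

lemma has_real_derivative_integral_dominated:
  fixes f f' :: "real \<Rightarrow> 'a \<Rightarrow> real" and M :: "'a measure"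
  assumes d: "d > 0"
    and int: "\<And>y. \<bar>y - x\<bar> < d \<Longrightarrow> integrable M (f y)"
    and der: "\<And>y t. \<bar>y - x\<bar> < d \<Longrightarrow> t \<in> space M \<Longrightarrow> ((\<lambda>y. f y t) has_real_derivative f' y t) (at y)"
    and meas: "f' x \<in> borel_measurable M"
    and w: "integrable M w"
    and bound: "\<And>y t. \<bar>y - x\<bar> < d \<Longrightarrow> t \<in> space M \<Longrightarrow> \<bar>f' y t\<bar> \<le> w t"
  shows "((\<lambda>y. integral\<^sup>L M (f y)) has_real_derivative integral\<^sup>L M (f' x)) (at x)"
proof -
  define q where "q y t = (f y t - f x t) / (y - x)" for y t
  have q_bound: "\<bar>q y t\<bar> \<le> w t" if y: "\<bar>y - x\<bar> < d" "y \<noteq> x" and t: "t \<in> space M" for y t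
  proof -
    have "norm (f y t - f x t) \<le> w t * norm (y - x)"
    proof (rule field_differentiable_bound[where S = "ball x d" and f = "\<lambda>y. f y t" and f' = "\<lambda>y. f' y t"])
      fix z assume "z \<in> ball x d"
      then have z: "\<bar>z - x\<bar> < d" by (simp add: dist_real_def abs_minus_commute)
      show "((\<lambda>y. f y t) has_field_derivative f' z t) (at z within ball x d)"
        using der[OF z t] by (rule has_field_derivative_at_within)
      show "norm (f' z t) \<le> w t" using bound[OF z t] by simp
    qed (use y d in \<open>auto simp: dist_real_def abs_minus_commute\<close>)
    then show ?thesis using y by (simp add: q_def abs_divide divide_le_eq)
  qed
  have lim: "((\<lambda>y. integral\<^sup>L M (q y)) \<longlongrightarrow> integral\<^sup>L M (f' x)) (at x)"
    unfolding tendsto_at_iff_sequentially comp_def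
  proof (intro allI impI)
    fix Y :: "nat \<Rightarrow> real" assume Yne: "\<forall>i. Y i \<in> UNIV - {x}" and Yx: "Y \<longlonglongrightarrow> x"
    obtain N where N: "\<And>i. i \<ge> N \<Longrightarrow> \<bar>Y i - x\<bar> < d"
      using tendstoD[OF Yx d] unfolding eventually_sequentially dist_real_def by auto
    have Yat: "filterlim Y (at x) sequentially" using Yx Yne by (intro filterlim_atI) auto
    show "(\<lambda>i. integral\<^sup>L M (q (Y i))) \<longlonglongrightarrow> integral\<^sup>L M (f' x)"
    proof (rule LIMSEQ_offset[where k = N], rule integral_dominated_convergence[where w = w])
      show "q (Y (i + N)) \<in> borel_measurable M" for i
        using borel_measurable_integrable[OF int[OF N[of "i + N"]]] borel_measurable_integrable[OF int[of x]] d
        unfolding q_def by (intro borel_measurable_divide borel_measurable_diff) auto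
      show "AE t in M. (\<lambda>i. q (Y (i + N)) t) \<longlonglongrightarrow> f' x t"
      proof (rule AE_I2)
        fix t assume t: "t \<in> space M"
        have "((\<lambda>y. q y t) \<longlongrightarrow> f' x t) (at x)"
          using der[OF _ t, of x] d unfolding has_field_derivative_iff q_def by simp
        then show "(\<lambda>i. q (Y (i + N)) t) \<longlonglongrightarrow> f' x t"
          by (intro LIMSEQ_ignore_initial_segment filterlim_compose[OF _ Yat])
      qed
      show "AE t in M. norm (q (Y (i + N)) t) \<le> w t" for i
        using q_bound N[of "i + N"] Yne by (auto intro!: AE_I2)
    qed (use meas w in auto)
  qed
  have "\<forall>\<^sub>F y in at x. integral\<^sup>L M (q y) = (integral\<^sup>L M (f y) - integral\<^sup>L M (f x)) / (y - x)"
    using eventually_at_ball[OF d, of x UNIV]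
  proof eventually_elim
    case (elim y)
    then have "\<bar>y - x\<bar> < d" by (simp add: dist_real_def)
    then show ?case using int[of y] int[of x] d by (simp add: q_def[abs_def])
  qed
  from Lim_transform_eventually[OF lim this] show ?thesis by (simp add: has_field_derivative_iff)
qed

lemma DERIV_neg_at_zeros_imp_nonpos:
  fixes F :: "real \<Rightarrow> real"
  assumes cont: "continuous_on {a..b} F"
    and down: "\<And>x. x \<in> {a..b} \<Longrightarrow> F x = 0 \<Longrightarrow> \<exists>D<0. (F has_real_derivative D) (at x)"
    and Fa: "F a \<le> 0" and y: "y \<in> {a..b}"
  shows "F y \<le> 0"
proof (rule ccontr)
  assume Fy: "\<not> F y \<le> 0"
  define T where "T = {a..y} \<inter> F -` {..0}"
  have "closed T"
    unfolding T_def using cont y by (intro continuous_closed_preimage) (auto elim: continuous_on_subset)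
  moreover have "a \<in> T" "bdd_above T" using Fa y by (auto simp: T_def)
  ultimately have cT: "Sup T \<in> T" using closed_contains_Sup by blast
  define c where "c = Sup T"
  have upper: "z \<in> T \<Longrightarrow> z \<le> c" for z unfolding c_def using \<open>bdd_above T\<close> by (intro cSup_upper)
  have c: "a \<le> c" "c \<le> y" "F c \<le> 0" using cT by (auto simp: T_def c_def)
  with Fy have cy: "c < y" by (cases "c = y") auto
  show False
  proof (cases "F c = 0")
    case True
    moreover have "c \<in> {a..b}" using c y by auto
    ultimately obtain D where "D < 0" and D: "(F has_real_derivative D) (at c)" using down by blast
    then obtain d where d: "d > 0" "\<And>h. h > 0 \<Longrightarrow> h < d \<Longrightarrow> F c > F (c + h)"
      using DERIV_neg_dec_right by blast
    define h where "h = min (d / 2) ((y - c) / 2)"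
    have h: "h > 0" "h < d" "c + h \<le> y" using d cy by (auto simp: h_def min_def field_simps)
    then have "c + h \<in> T" using d(2)[of h] True c by (auto simp: T_def)
    then show False using upper[of "c + h"] h by auto
  next
    case False
    then have "F c < 0" using c by auto
    moreover have "continuous_on {c..y} F" using cont c y by (auto elim: continuous_on_subset)
    ultimately obtain z where z: "c \<le> z" "z \<le> y" "F z = 0"
      using IVT'[of F c 0 y] Fy cy by auto
    then have "z \<in> T" using c by (auto simp: T_def)
    then show False using upper[of z] z \<open>F c < 0\<close> by auto
  qed
qed

lemma DERIV_neg_at_zeros_imp_neg:
  fixes F :: "real \<Rightarrow> real"
  assumes ab: "a < b"
    and cont: "continuous_on {a..b} F"
    and down: "\<And>x. x \<in> {a..b} \<Longrightarrow> F x = 0 \<Longrightarrow> \<exists>D<0. (F has_real_derivative D) (at x)"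
    and Fa: "F a \<le> 0"
  shows "F b < 0"
proof (rule ccontr)
  have nonpos: "y \<in> {a..b} \<Longrightarrow> F y \<le> 0" for y
    by (rule DERIV_neg_at_zeros_imp_nonpos[OF cont down Fa])
  assume "\<not> F b < 0"
  then have "F b = 0" using nonpos[of b] ab by auto
  moreover have "b \<in> {a..b}" using ab by simp
  ultimately obtain D where "D < 0" and D: "(F has_real_derivative D) (at b)" using down by blast
  then obtain d where d: "d > 0" "\<And>h. h > 0 \<Longrightarrow> h < d \<Longrightarrow> F b < F (b - h)"
    using DERIV_neg_dec_left by blast
  define h where "h = min (d / 2) ((b - a) / 2)"
  have h: "h > 0" "h < d" "a \<le> b - h" using d ab by (auto simp: h_def min_def field_simps)
  then show False using d(2)[OF h(1,2)] nonpos[of "b - h"] \<open>F b = 0\<close> ab by auto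
qed

lemma strictly_concave_onI_ordered:
  assumes "\<And>x y u. x \<in> S \<Longrightarrow> y \<in> S \<Longrightarrow> x < y \<Longrightarrow> 0 < u \<Longrightarrow> u < 1 \<Longrightarrow>
      (1 - u) * f x + u * f y < f ((1 - u) * x + u * y)"
  shows "strictly_concave_on S f"
  unfolding strictly_concave_on_def
proof (intro ballI impI allI)
  fix x y u :: real assume x: "x \<in> S" and y: "y \<in> S" and "x \<noteq> y" and u: "0 < u \<and> u < 1"
  show "(1 - u) * f x + u * f y < f ((1 - u) * x + u * y)"
  proof (cases "x < y")
    case True then show ?thesis using assms x y u by blast
  next
    case False
    then have "(1 - (1 - u)) * f y + (1 - u) * f x < f ((1 - (1 - u)) * y + (1 - u) * x)"
      using assms[of y x "1 - u"] x y u \<open>x \<noteq> y\<close> by auto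
    then show ?thesis by (simp add: algebra_simps)
  qed
qed

lemma strictly_concave_on_if_deriv_decreasing:
  fixes f f' :: "real \<Rightarrow> real"
  assumes S: "convex S"
    and der: "\<And>x. x \<in> S \<Longrightarrow> (f has_real_derivative f' x) (at x)"
    and dec: "\<And>x y. x \<in> S \<Longrightarrow> y \<in> S \<Longrightarrow> x < y \<Longrightarrow> f' y < f' x"
  shows "strictly_concave_on S f"
proof (rule strictly_concave_onI_ordered)
  fix x y u :: real assume xy: "x \<in> S" "y \<in> S" "x < y" and u: "0 < u" "u < 1"
  have between: "s \<in> S" if "x \<le> s" "s \<le> y" for s
    using S xy that unfolding is_interval_convex_1[symmetric] is_interval_1 by blast
  define z where "z = (1 - u) * x + u * y"
  have zx: "z - x = u * (y - x)" and yz: "y - z = (1 - u) * (y - x)"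
    unfolding z_def by (auto simp: algebra_simps)
  have "0 < u * (y - x)" "0 < (1 - u) * (y - x)" using xy u by simp_all
  then have z: "x < z" "z < y" by (simp_all only: zx[symmetric] yz[symmetric])
  have der_xy: "\<forall>s. x \<le> s \<and> s \<le> y \<longrightarrow> (f has_real_derivative f' s) (at s)"
    using der between by blast
  obtain \<xi>1 where 1: "x < \<xi>1" "\<xi>1 < z" "f z - f x = (z - x) * f' \<xi>1"
    using MVT2[OF z(1), of f f'] der_xy z by auto
  obtain \<xi>2 where 2: "z < \<xi>2" "\<xi>2 < y" "f y - f z = (y - z) * f' \<xi>2"
    using MVT2[OF z(2), of f f'] der_xy z by auto
  have "\<xi>1 \<in> S" "\<xi>2 \<in> S" using between 1 2 z by auto
  then have "f' \<xi>2 < f' \<xi>1" using dec 1 2 by auto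
  have "f z - ((1 - u) * f x + u * f y) = (1 - u) * (f z - f x) - u * (f y - f z)"
    by (simp add: algebra_simps)
  also have "\<dots> = (1 - u) * u * (y - x) * (f' \<xi>1 - f' \<xi>2)"
    unfolding 1(3) 2(3) zx yz by (simp add: algebra_simps)
  also have "\<dots> > 0" using u xy \<open>f' \<xi>2 < f' \<xi>1\<close> by simp
  finally show "(1 - u) * f x + u * f y < f ((1 - u) * x + u * y)" unfolding z_def by simp
qed

lemma strictly_concave_on_cong:
  assumes "convex S" "\<And>x. x \<in> S \<Longrightarrow> f x = g x" "strictly_concave_on S f"
  shows "strictly_concave_on S g"
proof -
  have "(1 - u) * x + u * y \<in> S" if "x \<in> S" "y \<in> S" "0 < u" "u < 1" for x y u
    using convexD[OF assms(1) that(1,2), of "1 - u" u] that by simp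
  then show ?thesis using assms(2,3) unfolding strictly_concave_on_def by auto
qed

lemma strictly_concave_on_add_const:
  "strictly_concave_on S f \<Longrightarrow> strictly_concave_on S (\<lambda>x. c + f x)"
  unfolding strictly_concave_on_def by (auto simp: algebra_simps)

section \<open>Integrals against \<open>exp (- x * cosh t)\<close>\<close>

definition exp_order :: "(real \<Rightarrow> real) \<Rightarrow> bool" where
  "exp_order g \<longleftrightarrow> continuous_on UNIV g \<and> (\<exists>C P. \<forall>t\<ge>0. \<bar>g t\<bar> \<le> C * exp (P * t))"

lemma exp_orderI:
  assumes "continuous_on UNIV g" "\<And>t. t \<ge> 0 \<Longrightarrow> \<bar>g t\<bar> \<le> C * exp (P * t)"
  shows "exp_order g"
  using assms unfolding exp_order_def by blast

lemma exp_order_continuous: "exp_order g \<Longrightarrow> continuous_on UNIV g"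
  unfolding exp_order_def by blast

lemma exp_order_const: "exp_order (\<lambda>t. c)"
  by (rule exp_orderI[of _ "\<bar>c\<bar>" 0]) auto

lemma exp_order_mult:
  assumes "exp_order f" "exp_order g"
  shows "exp_order (\<lambda>t. f t * g t)"
proof -
  obtain C1 P1 where f: "\<And>t. t \<ge> 0 \<Longrightarrow> \<bar>f t\<bar> \<le> C1 * exp (P1 * t)"
    using assms(1) unfolding exp_order_def by blast
  obtain C2 P2 where g: "\<And>t. t \<ge> 0 \<Longrightarrow> \<bar>g t\<bar> \<le> C2 * exp (P2 * t)"
    using assms(2) unfolding exp_order_def by blast
  show ?thesis
  proof (rule exp_orderI[of _ "C1 * C2" "P1 + P2"])
    show "continuous_on UNIV (\<lambda>t. f t * g t)"
      using assms by (intro continuous_intros exp_order_continuous)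
    fix t :: real assume t: "t \<ge> 0"
    have "\<bar>f t * g t\<bar> = \<bar>f t\<bar> * \<bar>g t\<bar>" by (rule abs_mult)
    also have "\<dots> \<le> (C1 * exp (P1 * t)) * (C2 * exp (P2 * t))"
      by (rule mult_mono[OF f[OF t] g[OF t]]) (use order_trans[OF abs_ge_zero f[OF t]] in simp_all)
    also have "\<dots> = C1 * C2 * exp ((P1 + P2) * t)" by (simp add: distrib_right exp_add)
    finally show "\<bar>f t * g t\<bar> \<le> C1 * C2 * exp ((P1 + P2) * t)" .
  qed
qed

lemma exp_order_add:
  assumes "exp_order f" "exp_order g"
  shows "exp_order (\<lambda>t. f t + g t)"
proof -
  obtain C1 P1 where f: "\<And>t. t \<ge> 0 \<Longrightarrow> \<bar>f t\<bar> \<le> C1 * exp (P1 * t)"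
    using assms(1) unfolding exp_order_def by blast
  obtain C2 P2 where g: "\<And>t. t \<ge> 0 \<Longrightarrow> \<bar>g t\<bar> \<le> C2 * exp (P2 * t)"
    using assms(2) unfolding exp_order_def by blast
  show ?thesis
  proof (rule exp_orderI[of _ "\<bar>C1\<bar> + \<bar>C2\<bar>" "max P1 P2"])
    show "continuous_on UNIV (\<lambda>t. f t + g t)"
      using assms by (intro continuous_intros exp_order_continuous)
    fix t :: real assume t: "t \<ge> 0"
    have le_max: "C * exp (P * t) \<le> \<bar>C\<bar> * exp (max P1 P2 * t)" if "P \<le> max P1 P2" for C P
      using that t by (intro mult_mono) (auto intro: mult_right_mono)
    have "\<bar>f t\<bar> \<le> \<bar>C1\<bar> * exp (max P1 P2 * t)" "\<bar>g t\<bar> \<le> \<bar>C2\<bar> * exp (max P1 P2 * t)"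
      using order_trans[OF f[OF t] le_max] order_trans[OF g[OF t] le_max] by simp_all
    then show "\<bar>f t + g t\<bar> \<le> (\<bar>C1\<bar> + \<bar>C2\<bar>) * exp (max P1 P2 * t)"
      using abs_triangle_ineq[of "f t" "g t"] by (simp add: distrib_right)
  qed
qed

lemma exp_order_power: "exp_order f \<Longrightarrow> exp_order (\<lambda>t. f t ^ k)"
  by (induction k) (simp_all add: exp_order_const exp_order_mult)

lemma exp_order_cosh: "exp_order (\<lambda>t. cosh (a * t))"
proof (rule exp_orderI[of _ 1 "\<bar>a\<bar>"])
  fix t :: real assume "t \<ge> 0"
  then have "\<bar>cosh (a * t)\<bar> = cosh (\<bar>a\<bar> * t)" by (simp add: abs_mult)
  also have "\<dots> \<le> exp (\<bar>a\<bar> * t)" using \<open>t \<ge> 0\<close> by (simp add: cosh_def)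
  finally show "\<bar>cosh (a * t)\<bar> \<le> 1 * exp (\<bar>a\<bar> * t)" by simp
qed (intro continuous_intros)

lemma exp_order_sinh: "exp_order (\<lambda>t. sinh (a * t))"
proof -
  obtain C P where bound: "\<And>t. t \<ge> 0 \<Longrightarrow> \<bar>cosh (a * t)\<bar> \<le> C * exp (P * t)"
    using exp_order_cosh[of a] unfolding exp_order_def by blast
  show ?thesis
  proof (rule exp_orderI[of _ C P])
    fix t :: real assume "t \<ge> 0"
    have "\<bar>sinh (a * t)\<bar> \<le> cosh (a * t)" by (rule abs_sinh_le_cosh_real)
    also have "\<dots> \<le> C * exp (P * t)" using bound[OF \<open>t \<ge> 0\<close>] by simp
    finally show "\<bar>sinh (a * t)\<bar> \<le> C * exp (P * t)" .
  qed (intro continuous_intros)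
qed

definition cosh_transform :: "(real \<Rightarrow> real) \<Rightarrow> real \<Rightarrow> real" where
  "cosh_transform g x = (LBINT t:{0<..}. g t * exp (- x * cosh t))"

lemma set_integrable_cosh_transform:
  assumes g: "exp_order g" and x: "x > 0"
  shows "set_integrable lborel {0<..} (\<lambda>t. g t * exp (- x * cosh t))"
proof -
  obtain C P where bound: "\<And>t. t \<ge> 0 \<Longrightarrow> \<bar>g t\<bar> \<le> C * exp (P * t)"
    using g unfolding exp_order_def by blast
  show ?thesis
  proof (rule set_integrable_bound[OF set_integrable_mult_right[OF
        set_integrable_exp_linear_minus_cosh[OF x, of P], of C]])
    show "set_borel_measurable lborel {0<..} (\<lambda>t. g t * exp (- x * cosh t))"
      unfolding set_borel_measurable_def measurable_lborel2 using exp_order_continuous[OF g]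
      by (intro borel_measurable_continuous_on_indicator)
        (auto intro!: continuous_intros elim: continuous_on_subset)
    have "\<bar>g t * exp (- x * cosh t)\<bar> \<le> C * exp (P * t - x * cosh t)" if "t > 0" for t
    proof -
      have "\<bar>g t * exp (- x * cosh t)\<bar> = \<bar>g t\<bar> * exp (- x * cosh t)" by (simp add: abs_mult)
      also have "\<dots> \<le> C * exp (P * t) * exp (- x * cosh t)"
        using bound that by (intro mult_right_mono) auto
      finally show ?thesis by (simp add: mult.assoc flip: exp_add)
    qed
    then show "AE t in lborel. t \<in> {0<..} \<longrightarrow>
        norm (g t * exp (- x * cosh t)) \<le> norm (C * exp (P * t - x * cosh t))"
      by (auto intro: order_trans[OF _ abs_ge_self])
  qed
qed

lemma cosh_transform_cmult: "cosh_transform (\<lambda>t. c * g t) x = c * cosh_transform g x"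
  unfolding cosh_transform_def by (simp add: mult.assoc)

lemma cosh_transform_add:
  assumes "exp_order f" "exp_order g" "x > 0"
  shows "cosh_transform (\<lambda>t. f t + g t) x = cosh_transform f x + cosh_transform g x"
  unfolding cosh_transform_def
  using set_integrable_cosh_transform[OF assms(1,3)] set_integrable_cosh_transform[OF assms(2,3)]
  by (simp add: distrib_right)

lemma cosh_transform_diff:
  assumes "exp_order f" "exp_order g" "x > 0"
  shows "cosh_transform (\<lambda>t. f t - g t) x = cosh_transform f x - cosh_transform g x"
  unfolding cosh_transform_def
  using set_integrable_cosh_transform[OF assms(1,3)] set_integrable_cosh_transform[OF assms(2,3)]
  by (simp add: left_diff_distrib)

lemma cosh_transform_mono:
  assumes "exp_order f" "exp_order g" "x > 0" "\<And>t. t > 0 \<Longrightarrow> f t \<le> g t"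
  shows "cosh_transform f x \<le> cosh_transform g x"
  unfolding cosh_transform_def
  using set_integrable_cosh_transform[OF assms(1,3)] set_integrable_cosh_transform[OF assms(2,3)] assms(4)
  by (intro set_integral_mono) (auto intro!: mult_right_mono)

lemma cosh_transform_pos:
  assumes g: "exp_order g" and pos: "\<And>t. t > 0 \<Longrightarrow> g t > 0" and x: "x > 0"
  shows "cosh_transform g x > 0"
proof -
  define h where "h t = indicator {0<..} t *\<^sub>R (g t * exp (- x * cosh t))" for t :: real
  have int: "integrable lborel h"
    using set_integrable_cosh_transform[OF g x] unfolding set_integrable_def h_def .
  have h_pos: "t > 0 \<Longrightarrow> h t > 0" for t
    using pos[of t] by (simp add: h_def)
  have h_nonneg: "0 \<le> h t" for t
    using h_pos[of t] by (cases "t > 0") (auto simp: h_def)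
  have eq: "cosh_transform g x = integral\<^sup>L lborel h"
    unfolding cosh_transform_def set_lebesgue_integral_def h_def ..
  have "cosh_transform g x \<noteq> 0"
  proof
    assume "cosh_transform g x = 0"
    then have "AE t in lborel. h t = 0"
      using integral_nonneg_eq_0_iff_AE[OF int] h_nonneg by (simp add: eq)
    then have "AE t in lborel. t \<notin> {0<..1::real}"
      by (rule AE_mp) (auto intro!: AE_I2 dest: h_pos)
    moreover have "{t. 0 < t \<and> t \<le> 1} = {0<..1::real}" by auto
    ultimately have "emeasure lborel {0<..1::real} = 0"
      using AE_iff_measurable[of "{0<..1::real}" lborel "\<lambda>t. t \<notin> {0<..1::real}"] by simp
    then show False by simp
  qed
  moreover have "cosh_transform g x \<ge> 0"
    unfolding eq using h_nonneg by (simp add: integral_nonneg_AE)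
  ultimately show ?thesis by simp
qed

lemma has_real_derivative_cosh_transform:
  assumes g: "exp_order g" and x: "x > 0"
  shows "(cosh_transform g has_real_derivative - cosh_transform (\<lambda>t. g t * cosh t) x) (at x)"
proof -
  have gc: "exp_order (\<lambda>t. g t * cosh t)"
    using g exp_order_cosh[of 1] by (simp add: exp_order_mult)
  have cont: "continuous_on UNIV g" using g by (rule exp_order_continuous)
  define f where "f y t = indicator {0<..} t *\<^sub>R (g t * exp (- y * cosh t))" for y t :: real
  define f' where "f' y t = indicator {0<..} t *\<^sub>R (g t * (- cosh t * exp (- y * cosh t)))" for y t :: real
  define w where "w t = norm (indicator {0<..} t *\<^sub>R (g t * cosh t * exp (- (x / 2) * cosh t)))" for t :: real
  have "((\<lambda>y. integral\<^sup>L lborel (f y)) has_real_derivative integral\<^sup>L lborel (f' x)) (at x)"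
  proof (rule has_real_derivative_integral_dominated[where d = "x / 2" and w = w])
    show "integrable lborel (f y)" if "\<bar>y - x\<bar> < x / 2" for y
    proof -
      have "y > 0" using that x by (auto simp: abs_if split: if_splits)
      then show ?thesis
        using set_integrable_cosh_transform[OF g] unfolding set_integrable_def f_def[abs_def] by blast
    qed
    show "((\<lambda>y. f y t) has_real_derivative f' y t) (at y)" for y t
      unfolding f_def f'_def by (auto intro!: derivative_eq_intros)
    show "f' x \<in> borel_measurable lborel"
      unfolding f'_def[abs_def] measurable_lborel2 using cont
      by (intro borel_measurable_continuous_on_indicator)
        (auto intro!: continuous_intros elim: continuous_on_subset)
    show "integrable lborel w"
      using integrable_norm[OF set_integrable_cosh_transform[OF gc, of "x / 2", unfolded set_integrable_def]]
        x unfolding w_def by simp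
    show "\<bar>f' y t\<bar> \<le> w t" if "\<bar>y - x\<bar> < x / 2" for y t
    proof (cases "t > 0")
      case True
      have "x / 2 * cosh t \<le> y * cosh t" using that by (intro mult_right_mono) (auto simp: abs_if split: if_splits)
      then have "\<bar>g t\<bar> * cosh t * exp (- y * cosh t) \<le> \<bar>g t\<bar> * cosh t * exp (- (x / 2) * cosh t)"
        by (intro mult_left_mono) auto
      then show ?thesis using True by (simp add: f'_def w_def abs_mult mult_ac)
    qed (simp add: f'_def w_def)
  qed (use x in auto)
  moreover have "cosh_transform g = (\<lambda>y. integral\<^sup>L lborel (f y))"
    unfolding cosh_transform_def set_lebesgue_integral_def f_def by simp
  moreover have "integral\<^sup>L lborel (f' x) = - cosh_transform (\<lambda>t. g t * cosh t) x"
    unfolding f'_def cosh_transform_def set_lebesgue_integral_def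
    by (simp add: algebra_simps flip: integral_minus)
  ultimately show ?thesis by simp
qed

lemma exp_order_mult_exp_cosh_tendsto_zero:
  assumes G: "exp_order G" and x: "x > 0"
  shows "((\<lambda>t. G t * exp (- x * cosh t)) \<longlongrightarrow> 0) at_top"
proof -
  obtain C P where CP: "\<And>t. t \<ge> 0 \<Longrightarrow> \<bar>G t\<bar> \<le> C * exp (P * t)"
    using G unfolding exp_order_def by blast
  have C: "0 \<le> C" using CP[of 0] by simp
  define K where "K = C * exp ((P + 1)\<^sup>2 / x - x)"
  have "\<forall>\<^sub>F t in at_top. norm (G t * exp (- x * cosh t)) \<le> K * exp (- t)"
    unfolding eventually_at_top_linorder
  proof (intro exI[of _ 0] allI impI)
    fix t :: real assume t: "t \<ge> 0"
    have "norm (G t * exp (- x * cosh t)) = \<bar>G t\<bar> * exp (- x * cosh t)" by (simp add: abs_mult)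
    also have "\<dots> \<le> C * exp (P * t) * exp (- x * cosh t)" using CP t by (intro mult_right_mono) auto
    also have "\<dots> = C * exp (P * t - x * cosh t)" by (simp add: mult.assoc flip: exp_add)
    also have "\<dots> \<le> C * (exp ((P + 1)\<^sup>2 / x - x) * exp (- t))"
      using exp_linear_minus_cosh_le[OF x t, of P] C by (rule mult_left_mono)
    finally show "norm (G t * exp (- x * cosh t)) \<le> K * exp (- t)" by (simp add: K_def mult.assoc)
  qed
  moreover have "((\<lambda>t. K * exp (- t)) \<longlongrightarrow> 0) at_top"
    using tendsto_mult_right_zero[OF tendsto_exp_neg_at_top] by simp
  ultimately show ?thesis by (rule Lim_null_comparison)
qed

lemma cosh_transform_by_parts:
  assumes G: "exp_order G" and G': "exp_order G'"
    and dG: "\<And>t. (G has_real_derivative G' t) (at t)" and G0: "G 0 = 0" and x: "x > 0"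
  shows "cosh_transform G' x = x * cosh_transform (\<lambda>t. sinh t * G t) x"
proof -
  have cG: "continuous_on UNIV G" and cG': "continuous_on UNIV G'"
    using G G' by (simp_all add: exp_order_continuous)
  define F where "F t = G t * exp (- x * cosh t)" for t
  define f where "f t = G' t * exp (- x * cosh t) - x * (sinh t * G t * exp (- x * cosh t))" for t
  have int1: "set_integrable lborel {0<..} (\<lambda>t. G' t * exp (- x * cosh t))"
    by (rule set_integrable_cosh_transform[OF G' x])
  have "exp_order (\<lambda>t. sinh t * G t)"
    using exp_order_mult[OF exp_order_sinh[of 1] G] by simp
  then have int2: "set_integrable lborel {0<..} (\<lambda>t. sinh t * G t * exp (- x * cosh t))"
    by (rule set_integrable_cosh_transform[OF _ x])
  have "(LBINT t=0..\<infinity>. f t) = 0 - 0"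
  proof (rule interval_integral_FTC_integrable[where F = F])
    fix t assume "0 < ereal t" "ereal t < \<infinity>"
    have "(F has_real_derivative G' t * exp (- x * cosh t) + G t * (exp (- x * cosh t) * (- x * sinh t))) (at t)"
      unfolding F_def by (intro derivative_eq_intros dG) (auto simp: dG)
    then show "(F has_vector_derivative f t) (at t)"
      by (simp add: f_def algebra_simps has_real_derivative_iff_has_vector_derivative)
    show "isCont f t" unfolding f_def
      using cG cG' by (auto intro!: continuous_intros simp: continuous_on_eq_continuous_at)
  next
    show "set_integrable lborel (einterval 0 \<infinity>) f"
      unfolding f_def einterval_0_infty using int1 set_integrable_mult_right[OF int2, of x]
      by (intro set_integral_diff(1))
  next
    have "isCont F 0" unfolding F_def using cG by (auto intro!: continuous_intros simp: continuous_on_eq_continuous_at)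
    then have "(F \<longlongrightarrow> 0) (at_right 0)"
      using G0 by (simp add: F_def isCont_def filterlim_at_split)
    then show "((F \<circ> real_of_ereal) \<longlongrightarrow> 0) (at_right 0)"
      by (simp add: zero_ereal_def ereal_tendsto_simps)
  next
    show "((F \<circ> real_of_ereal) \<longlongrightarrow> 0) (at_left \<infinity>)"
      unfolding ereal_tendsto_simps F_def using exp_order_mult_exp_cosh_tendsto_zero[OF G x] .
  qed simp
  then have "(LBINT t:{0<..}. f t) = 0" by (simp add: interval_lebesgue_integral_0_infty)
  moreover have "(LBINT t:{0<..}. f t) = cosh_transform G' x - x * cosh_transform (\<lambda>t. sinh t * G t) x"
    unfolding f_def cosh_transform_def using int1 set_integrable_mult_right[OF int2, of x]
    by (simp add: mult.assoc)
  ultimately show ?thesis by simp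
qed

section \<open>The MacDonald function and its derivatives\<close>

text \<open>\<open>coshK a 0\<close> is \<open>K\<^sub>a\<close> and \<open>coshK a k\<close> is \<open>(-1)\<^sup>k\<close> times its \<open>k\<close>-th derivative.\<close>
definition coshK :: "real \<Rightarrow> nat \<Rightarrow> real \<Rightarrow> real" where
  "coshK a k x = cosh_transform (\<lambda>t. cosh t ^ k * cosh (a * t)) x"

definition sinhK :: "real \<Rightarrow> real \<Rightarrow> real" where
  "sinhK a x = cosh_transform (\<lambda>t. sinh t * sinh (a * t)) x"

lemma exp_order_coshK_kernel: "exp_order (\<lambda>t. cosh t ^ k * cosh (a * t))"
  using exp_order_mult[OF exp_order_power[OF exp_order_cosh[of 1]] exp_order_cosh[of a]] by simp

lemma exp_order_sinhK_kernel: "exp_order (\<lambda>t. sinh t * sinh (a * t))"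
  using exp_order_mult[OF exp_order_sinh[of 1] exp_order_sinh[of a]] by simp

lemma besselK_eq_coshK: "besselK a x = coshK a 0 x"
proof -
  have "besselK a x = integral\<^sup>L lborel (\<lambda>t. indicator {0..} t *\<^sub>R (exp (- x * cosh t) * cosh (a * t)))"
    unfolding besselK_def set_lebesgue_integral_def ..
  also have "\<dots> = integral\<^sup>L lborel (\<lambda>t. indicator {0<..} t *\<^sub>R (cosh t ^ 0 * cosh (a * t) * exp (- x * cosh t)))"
  proof (rule integral_cong_AE)
    show "(\<lambda>t. indicator {0..} t *\<^sub>R (exp (- x * cosh t) * cosh (a * t))) \<in> borel_measurable lborel"
      unfolding measurable_lborel2
      by (intro borel_measurable_continuous_on_indicator) (auto intro!: continuous_intros)
    show "(\<lambda>t. indicator {0<..} t *\<^sub>R (cosh t ^ 0 * cosh (a * t) * exp (- x * cosh t))) \<in> borel_measurable lborel"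
      unfolding measurable_lborel2
      by (intro borel_measurable_continuous_on_indicator) (auto intro!: continuous_intros)
    show "AE t in lborel. indicator {0..} t *\<^sub>R (exp (- x * cosh t) * cosh (a * t)) =
        indicator {0<..} t *\<^sub>R (cosh t ^ 0 * cosh (a * t) * exp (- x * cosh t))"
      using AE_lborel_singleton[of "0::real"] by eventually_elim (auto simp: indicator_def)
  qed
  also have "\<dots> = coshK a 0 x"
    unfolding coshK_def cosh_transform_def set_lebesgue_integral_def ..
  finally show ?thesis .
qed

lemma coshK_pos: "x > 0 \<Longrightarrow> coshK a k x > 0"
  unfolding coshK_def by (rule cosh_transform_pos[OF exp_order_coshK_kernel]) auto

lemma has_real_derivative_coshK:
  assumes "x > 0"
  shows "(coshK a k has_real_derivative - coshK a (Suc k) x) (at x)"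
proof -
  have fun_eq: "cosh_transform (\<lambda>t. cosh t ^ k * cosh (a * t)) = coshK a k"
    by (simp add: coshK_def[abs_def])
  have "cosh_transform (\<lambda>t. cosh t ^ k * cosh (a * t) * cosh t) x = coshK a (Suc k) x"
    by (simp add: coshK_def mult_ac)
  then show ?thesis
    using has_real_derivative_cosh_transform[OF exp_order_coshK_kernel assms, of k a]
    unfolding fun_eq by simp
qed

lemma x_mult_sinhK:
  assumes x: "x > 0"
  shows "x * sinhK a x = a * coshK a 0 x"
proof -
  have "cosh_transform (\<lambda>t. a * cosh (a * t)) x = x * cosh_transform (\<lambda>t. sinh t * sinh (a * t)) x"
    by (rule cosh_transform_by_parts[OF exp_order_sinh exp_order_mult[OF exp_order_const exp_order_cosh]])
      (auto intro!: derivative_eq_intros x)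
  then show ?thesis unfolding coshK_def sinhK_def cosh_transform_cmult by simp
qed

lemma coshK_1_add_sinhK:
  assumes x: "x > 0"
  shows "coshK a 1 x + a * sinhK a x = x * (coshK a 2 x - coshK a 0 x)"
proof -
  have cc: "exp_order (\<lambda>t. cosh t * cosh (a * t))"
    using exp_order_coshK_kernel[of 1 a] by simp
  have ss: "exp_order (\<lambda>t. a * (sinh t * sinh (a * t)))"
    by (rule exp_order_mult[OF exp_order_const exp_order_sinhK_kernel])
  have sc: "exp_order (\<lambda>t. sinh t * cosh (a * t))"
    using exp_order_mult[OF exp_order_sinh[of 1] exp_order_cosh[of a]] by simp
  have "((\<lambda>t. sinh t * cosh (a * t)) has_real_derivative
      cosh t * cosh (a * t) + a * (sinh t * sinh (a * t))) (at t)" for t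
    by (auto intro!: derivative_eq_intros simp: mult_ac)
  then have "cosh_transform (\<lambda>t. cosh t * cosh (a * t) + a * (sinh t * sinh (a * t))) x
      = x * cosh_transform (\<lambda>t. sinh t * (sinh t * cosh (a * t))) x"
    by (rule cosh_transform_by_parts[OF sc exp_order_add[OF cc ss]]) (simp_all add: x)
  moreover have "cosh_transform (\<lambda>t. cosh t * cosh (a * t) + a * (sinh t * sinh (a * t))) x
      = coshK a 1 x + a * sinhK a x"
    using cosh_transform_add[OF cc ss x] unfolding coshK_def sinhK_def cosh_transform_cmult by simp
  moreover have "sinh t * (sinh t * cosh (a * t)) = cosh t ^ 2 * cosh (a * t) - cosh t ^ 0 * cosh (a * t)" for t
  proof -
    have "sinh t * (sinh t * cosh (a * t)) = (cosh t ^ 2 - 1) * cosh (a * t)"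
      using sinh_square_eq[of t] by (simp add: power2_eq_square)
    then show ?thesis by (simp add: left_diff_distrib)
  qed
  moreover have "cosh_transform (\<lambda>t. cosh t ^ 2 * cosh (a * t) - cosh t ^ 0 * cosh (a * t)) x
      = coshK a 2 x - coshK a 0 x"
    unfolding coshK_def by (rule cosh_transform_diff[OF exp_order_coshK_kernel exp_order_coshK_kernel x])
  ultimately show ?thesis by simp
qed

lemma coshK_2_eq:
  assumes x: "x > 0"
  shows "coshK a 2 x = coshK a 1 x / x + coshK a 0 x + a\<^sup>2 * coshK a 0 x / x\<^sup>2"
proof -
  have J2: "coshK a 2 x = (coshK a 1 x + a * sinhK a x) / x + coshK a 0 x"
    using coshK_1_add_sinhK[OF x, of a] x by (simp add: field_simps)
  have S: "a * sinhK a x = a\<^sup>2 * coshK a 0 x / x"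
    using x_mult_sinhK[OF x, of a] x by (simp add: field_simps power2_eq_square)
  show ?thesis using x unfolding J2 S by (simp add: field_simps power2_eq_square)
qed

lemma coshK_1_diff_sinhK:
  assumes x: "x > 0"
  shows "coshK a 1 x - sinhK a x = coshK (a - 1) 0 x"
proof -
  have "coshK a 1 x - sinhK a x = cosh_transform (\<lambda>t. cosh t ^ 1 * cosh (a * t) - sinh t * sinh (a * t)) x"
    unfolding coshK_def sinhK_def
    by (rule cosh_transform_diff[OF exp_order_coshK_kernel exp_order_sinhK_kernel x, symmetric])
  also have "(\<lambda>t. cosh t ^ 1 * cosh (a * t) - sinh t * sinh (a * t)) = (\<lambda>t. cosh t ^ 0 * cosh ((a - 1) * t))"
  proof
    fix t
    have "cosh ((a - 1) * t) = cosh (a * t - t)" by (simp add: left_diff_distrib)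
    then show "cosh t ^ 1 * cosh (a * t) - sinh t * sinh (a * t) = cosh t ^ 0 * cosh ((a - 1) * t)"
      by (simp add: cosh_diff mult.commute)
  qed
  finally show ?thesis unfolding coshK_def .
qed

lemma neg_deriv_calK:
  assumes x: "x > 0"
  shows "- deriv (calK nu) x = 2 powr (nu - 1) * Gamma nu * (x powr nu * coshK (nu - 1) 0 x)"
proof -
  define c where "c = 2 powr (nu - 1) * Gamma nu"
  have "calK nu = (\<lambda>x. c * (x powr nu * coshK nu 0 x))"
    by (auto simp: calK_def c_def besselK_eq_coshK)
  then have "(calK nu has_real_derivative c * (nu * x powr (nu - 1) * coshK nu 0 x - x powr nu * coshK nu 1 x)) (at x)"
    using x by (auto intro!: derivative_eq_intros has_real_derivative_coshK simp: algebra_simps)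
  then have "deriv (calK nu) x = c * (nu * x powr (nu - 1) * coshK nu 0 x - x powr nu * coshK nu 1 x)"
    by (rule DERIV_imp_deriv)
  also have "nu * x powr (nu - 1) * coshK nu 0 x = x powr nu * sinhK nu x"
    using x_mult_sinhK[OF x, of nu] x by (simp add: powr_diff field_simps)
  finally have "- deriv (calK nu) x = c * (x powr nu * (coshK nu 1 x - sinhK nu x))"
    by (simp add: algebra_simps)
  then show ?thesis unfolding c_def coshK_1_diff_sinhK[OF x] .
qed

section \<open>The ratio \<open>-x K\<^sub>a'(x) / K\<^sub>a(x)\<close>\<close>

definition besselK_ratio :: "real \<Rightarrow> real \<Rightarrow> real" where
  "besselK_ratio a x = x * coshK a 1 x / coshK a 0 x"

lemma besselK_ratio_ge_arg:
  assumes x: "x > 0"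
  shows "x \<le> besselK_ratio a x"
proof -
  have "coshK a 0 x \<le> coshK a 1 x"
    unfolding coshK_def
    by (rule cosh_transform_mono[OF exp_order_coshK_kernel exp_order_coshK_kernel x])
      (simp add: cosh_real_ge_1 mult_right_mono[of 1 "cosh _", simplified])
  then show ?thesis using coshK_pos[OF x, of a 0] x by (simp add: besselK_ratio_def field_simps)
qed

lemma besselK_ratio_ge_order:
  assumes x: "x > 0"
  shows "a \<le> besselK_ratio a x"
proof -
  have "sinh t * sinh (a * t) \<le> cosh t ^ 1 * cosh (a * t)" for t
  proof -
    have "sinh t * sinh (a * t) \<le> \<bar>sinh t\<bar> * \<bar>sinh (a * t)\<bar>" by (simp flip: abs_mult)
    also have "\<dots> \<le> cosh t * cosh (a * t)" by (intro mult_mono abs_sinh_le_cosh_real) auto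
    finally show ?thesis by simp
  qed
  then have "sinhK a x \<le> coshK a 1 x"
    unfolding coshK_def sinhK_def
    by (intro cosh_transform_mono[OF exp_order_sinhK_kernel exp_order_coshK_kernel x])
  then have "a * coshK a 0 x \<le> x * coshK a 1 x"
    using x_mult_sinhK[OF x, of a] x by (metis mult_left_mono less_imp_le)
  then show ?thesis using coshK_pos[OF x, of a 0] by (simp add: besselK_ratio_def field_simps)
qed

text \<open>Bessel's differential equation for \<open>K\<^sub>a\<close>, read as a Riccati equation for the ratio.\<close>
lemma has_real_derivative_besselK_ratio:
  assumes x: "x > 0"
  shows "(besselK_ratio a has_real_derivative ((besselK_ratio a x)\<^sup>2 - a\<^sup>2) / x - x) (at x)"
proof -
  have pos: "coshK a 0 x > 0" by (rule coshK_pos[OF x])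
  have d0: "(coshK a 0 has_real_derivative - coshK a 1 x) (at x)"
    using has_real_derivative_coshK[OF x, of a 0] by simp
  have d1: "(coshK a 1 has_real_derivative - coshK a 2 x) (at x)"
    using has_real_derivative_coshK[OF x, of a 1] by (simp add: numeral_2_eq_2)
  have fun_eq: "besselK_ratio a = (\<lambda>x. x * coshK a 1 x / coshK a 0 x)"
    by (simp add: besselK_ratio_def[abs_def])
  show ?thesis
    unfolding fun_eq by (rule DERIV_cong[OF DERIV_divide[OF DERIV_mult[OF DERIV_ident d1] d0]])
      (use pos x in \<open>simp_all add: coshK_2_eq[OF x] besselK_ratio_def field_simps power2_eq_square\<close>)
qed

definition concavity_gap :: "real \<Rightarrow> real \<Rightarrow> real" where
  "concavity_gap a x = (besselK_ratio a x)\<^sup>2 - besselK_ratio a x - x\<^sup>2 - a\<^sup>2 + a + 1"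

lemma has_real_derivative_concavity_gap:
  assumes x: "x > 0"
  shows "(concavity_gap a has_real_derivative
      (2 * besselK_ratio a x - 1) * (((besselK_ratio a x)\<^sup>2 - a\<^sup>2) / x - x) - 2 * x) (at x)"
  unfolding concavity_gap_def[abs_def]
  by (rule derivative_eq_intros has_real_derivative_besselK_ratio[OF x] | simp)+
    (use x in \<open>simp add: field_simps\<close>)

lemma concavity_gap_downcrossing:
  assumes x: "x > 0" and a: "a \<ge> 0" and zero: "concavity_gap a x = 0"
  shows "\<exists>D<0. (concavity_gap a has_real_derivative D) (at x)"
proof -
  define Q where "Q = besselK_ratio a x"
  define D where "D = (2 * Q - 1) * ((Q\<^sup>2 - a\<^sup>2) / x - x) - 2 * x"
  have x2: "x\<^sup>2 = Q\<^sup>2 - Q - a\<^sup>2 + a + 1" using zero by (simp add: concavity_gap_def Q_def)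
  have "x * D = (2 * Q - 1) * (Q\<^sup>2 - a\<^sup>2 - x\<^sup>2) - 2 * x\<^sup>2"
    using x by (simp add: D_def field_simps power2_eq_square)
  also have "\<dots> = (2 * a + 1) * (a - 1 - Q)"
    unfolding x2 by (simp add: algebra_simps power2_eq_square)
  also have "\<dots> < 0" using besselK_ratio_ge_order[OF x, of a] a by (intro mult_pos_neg) (auto simp: Q_def)
  finally have "D < 0" using x by (simp add: mult_less_0_iff)
  moreover have "(concavity_gap a has_real_derivative D) (at x)"
    unfolding D_def Q_def by (rule has_real_derivative_concavity_gap[OF x])
  ultimately show ?thesis by blast
qed

lemma besselK_ratio_lt_if_concavity_gap_neg:
  assumes x: "x > 0" and a: "a \<ge> 0" and neg: "concavity_gap a x < 0"
  shows "besselK_ratio a x < x + a + 1"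
proof (rule ccontr)
  define Q where "Q = besselK_ratio a x"
  define r where "r = x + a + 1"
  assume "\<not> besselK_ratio a x < x + a + 1"
  then have "0 \<le> (Q - r) * (Q + r - 1)" using x a by (simp add: Q_def r_def)
  then have "concavity_gap a x \<ge> x * (2 * a + 1) + 2 * a + 1"
    by (simp add: concavity_gap_def Q_def r_def algebra_simps power2_eq_square)
  moreover have "x * (2 * a + 1) + 2 * a + 1 > 0" using x a by (simp add: add_pos_nonneg)
  ultimately show False using neg by simp
qed

lemma has_real_derivative_besselK_ratio_excess:
  assumes x: "x > 0"
  shows "((\<lambda>y. (besselK_ratio a y - y - a - 1) / y) has_real_derivative concavity_gap a x / x\<^sup>2) (at x)"
  using x
  by (auto intro!: derivative_eq_intros has_real_derivative_besselK_ratio[OF x]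
      simp: concavity_gap_def field_simps power2_eq_square)

lemma concavity_gap_pos:
  assumes a: "a \<ge> 0" and x0: "x0 > 0"
  shows "concavity_gap a x0 > 0"
proof (rule ccontr)
  assume "\<not> concavity_gap a x0 > 0"
  then have neg: "concavity_gap a y < 0" if "y > x0" for y
  proof (intro DERIV_neg_at_zeros_imp_neg[OF that])
    show "continuous_on {x0..y} (concavity_gap a)"
      using x0 by (intro continuous_at_imp_continuous_on ballI DERIV_isCont[OF has_real_derivative_concavity_gap]) auto
    show "\<exists>D<0. (concavity_gap a has_real_derivative D) (at z)" if "z \<in> {x0..y}" "concavity_gap a z = 0" for z
      using concavity_gap_downcrossing[OF _ a] that x0 by auto
  qed simp
  define g where "g y = (besselK_ratio a y - y - a - 1) / y" for y
  define x1 where "x1 = x0 + 1"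
  have x1: "x1 > x0" "x1 > 0" using x0 by (auto simp: x1_def)
  have g_x1: "g x1 < 0"
    using besselK_ratio_lt_if_concavity_gap_neg[OF x1(2) a neg[OF x1(1)]] x1 by (simp add: g_def divide_neg_pos)
  define X where "X = x1 + (a + 1) / (- g x1)"
  have X: "X > x1" using g_x1 a by (simp add: X_def divide_pos_neg)
  have "g X \<le> g x1"
  proof (rule DERIV_nonpos_imp_nonincreasing[of x1 X g])
    fix y assume y: "x1 \<le> y" "y \<le> X"
    have "(g has_real_derivative concavity_gap a y / y\<^sup>2) (at y)"
      unfolding g_def[abs_def] using has_real_derivative_besselK_ratio_excess y x1 by auto
    moreover have "concavity_gap a y / y\<^sup>2 \<le> 0" using neg[of y] y x1 by (simp add: divide_nonpos_pos)
    ultimately show "\<exists>d. (g has_real_derivative d) (at y) \<and> d \<le> 0" by blast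
  qed (use X in simp)
  then have "besselK_ratio a X - X - a - 1 \<le> X * g x1"
    using X x1 by (simp add: g_def field_simps)
  also have "\<dots> = x1 * g x1 - (a + 1)" using g_x1 by (simp add: X_def field_simps)
  also have "\<dots> < - (a + 1)" using g_x1 x1 by (simp add: mult_pos_neg)
  finally show False using besselK_ratio_ge_arg[of X a] X x1 by simp
qed

lemma has_real_derivative_log_powr_coshK:
  assumes x: "x > 0"
  shows "((\<lambda>x. (a + 1) * ln x + ln (coshK a 0 x)) has_real_derivative (a + 1 - besselK_ratio a x) / x) (at x)"
proof -
  have pos: "coshK a 0 x > 0" by (rule coshK_pos[OF x])
  have d0: "(coshK a 0 has_real_derivative - coshK a 1 x) (at x)"
    using has_real_derivative_coshK[OF x, of a 0] by simp
  show ?thesis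
    by (rule DERIV_cong[OF DERIV_add[OF DERIV_cmult[OF DERIV_ln[OF x]] DERIV_chain2[OF DERIV_ln[OF pos] d0]]])
      (use x pos in \<open>simp add: besselK_ratio_def field_simps\<close>)
qed

lemma has_real_derivative_log_powr_coshK_slope:
  assumes x: "x > 0"
  shows "((\<lambda>x. (a + 1 - besselK_ratio a x) / x) has_real_derivative - concavity_gap a x / x\<^sup>2) (at x)"
  by (rule DERIV_cong[OF DERIV_divide[OF DERIV_diff[OF DERIV_const has_real_derivative_besselK_ratio[OF x]] DERIV_ident]])
    (use x in \<open>simp_all add: concavity_gap_def field_simps power2_eq_square\<close>)

lemma strictly_concave_on_log_powr_coshK:
  assumes a: "a \<ge> 0"
  shows "strictly_concave_on {0<..} (\<lambda>x. (a + 1) * ln x + ln (coshK a 0 x))"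
proof (rule strictly_concave_on_if_deriv_decreasing[OF convex_real_interval(3)])
  show "((\<lambda>x. (a + 1) * ln x + ln (coshK a 0 x)) has_real_derivative (a + 1 - besselK_ratio a x) / x) (at x)"
    if "x \<in> {0<..}" for x
    using that by (simp add: has_real_derivative_log_powr_coshK)
  show "(a + 1 - besselK_ratio a y) / y < (a + 1 - besselK_ratio a x) / x"
    if "x \<in> {0<..}" "y \<in> {0<..}" "x < y" for x y
  proof (rule DERIV_neg_imp_decreasing[OF \<open>x < y\<close>])
    fix z assume "x \<le> z" "z \<le> y"
    then have z: "z > 0" using that by simp
    have "- concavity_gap a z / z\<^sup>2 < 0" using concavity_gap_pos[OF a z] z by simp
    then show "\<exists>D. ((\<lambda>x. (a + 1 - besselK_ratio a x) / x) has_real_derivative D) (at z) \<and> D < 0"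
      using has_real_derivative_log_powr_coshK_slope[OF z] by blast
  qed
qed

theorem theorem3:
  fixes nu :: real
  assumes "nu \<ge> 3 / 2"
  shows "strictly_log_concave_on {0<..} (\<lambda>x. - deriv (calK nu) x)"
proof -
  define a where "a = nu - 1"
  have a: "a \<ge> 0" using assms by (simp add: a_def)
  define c where "c = 2 powr (nu - 1) * Gamma nu"
  have c: "c > 0" using assms by (simp add: c_def Gamma_real_pos)
  have eq: "- deriv (calK nu) x = c * (x powr (a + 1) * coshK a 0 x)" if "x > 0" for x
    using neg_deriv_calK[OF that, of nu] by (simp add: c_def a_def)
  have K: "x powr (a + 1) > 0" "coshK a 0 x > 0" if "x > 0" for x
    using that coshK_pos[OF that] by simp_all
  have pos: "- deriv (calK nu) x > 0" if "x > 0" for x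
    using eq[OF that] c K[OF that] by simp
  have ln_eq: "ln c + ((a + 1) * ln x + ln (coshK a 0 x)) = ln (- deriv (calK nu) x)"
    if "x \<in> {0<..}" for x
    using that c K[of x] by (simp add: eq ln_mult ln_powr)
  have "strictly_concave_on {0<..} (\<lambda>x. ln (- deriv (calK nu) x))"
    by (rule strictly_concave_on_cong[where f = "\<lambda>x. ln c + ((a + 1) * ln x + ln (coshK a 0 x))",
          OF convex_real_interval(3) ln_eq strictly_concave_on_add_const[OF strictly_concave_on_log_powr_coshK[OF a]]])
  then show ?thesis using pos by (simp add: strictly_log_concave_on_def)
qed

end
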